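(* Let $f:\mathbb{R}\to[0,\infty)$ be a bounded probability density. Let $h\in L^\infty(\mathbb{R})$ with $h\ge0$, and let $\ell\in\mathbb{N}$ be such that $$\sup_{x\in[a,a+1)}f_\ell(x)\le\int_{a-1}^{a+2}h(w)\,\mathrm{d}w\qquad\text{for all }a\in\mathbb{R}.$$ Then $$\sup_{x\in[a,a+1)}f_{2\ell}(x)\le\int_{a-1}^{a+2}\Phi_\ell(h)(w)\,\mathrm{d}w\qquad\text{for all }a\in\mathbb{R}.$$
   Context: $f_1:=f$, $f_{k+1}:=f_k*f$, i.e. $f_{k+1}(x)=\int_\mathbb{R} f_k(x-y)f(y)\,\mathrm{d}y$. For $n\in\mathbb{N}$ and $h\in L^\infty(\mathbb{R})$, the function $\Phi_n(h)$ is defined by $\Phi_n(h)(x):=2\int_{\{z:\,|z|>(|x|-3)/2\}}f_n(z)\,h(x-z)\,\mathrm{d}z$ for $x\in\mathbb{R}$. *)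

theory Defs
  imports "HOL-Analysis.Analysis"
begin

text \<open>Convolution powers: conv_pow f (Suc 0) = f_1 = f,
  conv_pow f (Suc k + 1) = f_{k+1} = f_k * f. The value at index 0 is unused.\<close>
fun conv_pow :: "(real \<Rightarrow> real) \<Rightarrow> nat \<Rightarrow> real \<Rightarrow> real" where
  "conv_pow f 0 = (\<lambda>x. 0)"
| "conv_pow f (Suc 0) = f"
| "conv_pow f (Suc (Suc k)) =
     (\<lambda>x. LINT y|lborel. conv_pow f (Suc k) (x - y) * f y)"

definition Phi :: "(real \<Rightarrow> real) \<Rightarrow> nat \<Rightarrow> (real \<Rightarrow> real) \<Rightarrow> real \<Rightarrow> real" where
  "Phi f n h x = 2 * (LINT z:{z. \<bar>z\<bar> > (\<bar>x\<bar> - 3) / 2}|lborel. conv_pow f n z * h (x - z))"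

end

theory Submission imports Defs begin

(*
  Write G = f_l.  Since |z| + |x - z| \<ge> |x|, one of z, x - z lies in the tail
  A_x = {z. |x|/2 \<le> |z|}; the symmetry z \<leftrightarrow> x - z of the self-convolution
  G * G = f_{2l} therefore gives  f_{2l}(x) \<le> 2 \<integral>_{A_x} G(z) G(x - z) dz.
  For x \<in> [a, a+1) the hypothesis applied on [a - z, a - z + 1) bounds
  G(x - z) by \<integral>_{a-1}^{a+2} h(u - z) du.  After Fubini the inner integral,
  for u \<in> [a-1, a+2], runs over A_x, which lies inside the region
  {z. |z| > (|u| - 3)/2} defining \<Phi>_l(h)(u); so it is at most \<Phi>_l(h)(u)/2.
*)

lemma nn_integral_lborel_translate:
  fixes g :: "real \<Rightarrow> ennreal"
  assumes "g \<in> borel_measurable borel"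
  shows "(\<integral>\<^sup>+x. g (x - y) \<partial>lborel) = (\<integral>\<^sup>+x. g x \<partial>lborel)"
  using assms by (subst nn_integral_real_affine[where c=1 and t="-y"]) auto

lemma nn_integral_lborel_reflect:
  fixes g :: "real \<Rightarrow> ennreal"
  assumes "g \<in> borel_measurable borel"
  shows "(\<integral>\<^sup>+x. g (u - x) \<partial>lborel) = (\<integral>\<^sup>+x. g x \<partial>lborel)"
  using assms by (subst nn_integral_real_affine[where c="-1" and t=u]) auto

lemma AE_lborel_reflect:
  assumes "AE x in lborel. P (x::real)" and "{x. P x} \<in> sets borel"
  shows "AE z in lborel. P (u - z)"
proof -
  have reflect: "distr lborel borel (\<lambda>x. u + -1 * x) = (lborel::real measure)"
    using lborel_real_affine[of "-1" u] by (simp add: density_1)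
  have "AE x in distr lborel borel (\<lambda>x. u + -1 * x). P x"
    using assms(1) by (subst reflect) simp
  then show ?thesis
    using assms(2) by (subst (asm) AE_distr_iff) (auto simp: pred_def)
qed

lemma ennreal_integral_le_nn_integral:
  fixes g :: "'a \<Rightarrow> real"
  shows "ennreal (integral\<^sup>L M g) \<le> (\<integral>\<^sup>+x. ennreal (g x) \<partial>M)"
proof (cases "integrable M g")
  case True
  then have pos_int: "integrable M (\<lambda>x. max 0 (g x))" by auto
  have "integral\<^sup>L M g \<le> integral\<^sup>L M (\<lambda>x. max 0 (g x))"
    using True pos_int by (intro integral_mono) auto
  then have "ennreal (integral\<^sup>L M g) \<le> ennreal (integral\<^sup>L M (\<lambda>x. max 0 (g x)))"
    by (rule ennreal_leI)
  also have "\<dots> = (\<integral>\<^sup>+x. ennreal (max 0 (g x)) \<partial>M)"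
    using nn_integral_eq_integral[OF pos_int] by simp
  also have "\<dots> = (\<integral>\<^sup>+x. ennreal (g x) \<partial>M)"
    by (intro nn_integral_cong) (simp add: max_def ennreal_neg)
  finally show ?thesis .
next
  case False
  then show ?thesis by (simp add: not_integrable_integral_eq)
qed

text \<open>Symmetrisation of a self-convolution: since \<open>|z| + |x - z| \<ge> |x|\<close>, one of
  the two factors is evaluated in the tail \<open>{z. |x|/2 \<le> |z|}\<close>, and the
  substitution \<open>z \<mapsto> x - z\<close> exchanges the two factors.\<close>

lemma nn_self_convolution_tail:
  fixes g :: "real \<Rightarrow> ennreal"
  assumes [measurable]: "g \<in> borel_measurable borel"
  shows "(\<integral>\<^sup>+z. g (x - z) * g z \<partial>lborel)
    \<le> 2 * (\<integral>\<^sup>+z. indicator {z. \<bar>x\<bar>/2 \<le> \<bar>z\<bar>} z * g z * g (x - z) \<partial>lborel)"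
proof -
  define A where "A = {z::real. \<bar>x\<bar>/2 \<le> \<bar>z\<bar>}"
  have [measurable]: "A \<in> sets borel" unfolding A_def by measurable
  define k where "k z = indicator A z * g z * g (x - z)" for z
  have [measurable]: "k \<in> borel_measurable borel" unfolding k_def by measurable
  have "(\<integral>\<^sup>+z. g (x - z) * g z \<partial>lborel) \<le> (\<integral>\<^sup>+z. k z + k (x - z) \<partial>lborel)"
  proof (rule nn_integral_mono)
    fix z
    have "\<bar>x\<bar>/2 \<le> \<bar>z\<bar> \<or> \<bar>x\<bar>/2 \<le> \<bar>x - z\<bar>" by arith
    then have "z \<in> A \<or> x - z \<in> A" unfolding A_def by auto
    then show "g (x - z) * g z \<le> k z + k (x - z)"
      unfolding k_def by (auto simp: mult.commute intro: add_increasing add_increasing2)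
  qed
  also have "\<dots> = (\<integral>\<^sup>+z. k z \<partial>lborel) + (\<integral>\<^sup>+z. k (x - z) \<partial>lborel)"
    by (rule nn_integral_add) auto
  also have "\<dots> = 2 * (\<integral>\<^sup>+z. k z \<partial>lborel)"
    using nn_integral_lborel_reflect[of k x] by (simp add: mult_2)
  finally show ?thesis unfolding k_def A_def .
qed

definition bounded_prob_density :: "real \<Rightarrow> (real \<Rightarrow> real) \<Rightarrow> bool" where
  "bounded_prob_density C g \<longleftrightarrow> g \<in> borel_measurable borel \<and> (\<forall>x. 0 \<le> g x \<and> g x \<le> C)
     \<and> (\<integral>\<^sup>+x. ennreal (g x) \<partial>lborel) = 1"

locale bounded_density =
  fixes f :: "real \<Rightarrow> real" and C :: real
  assumes f_meas[measurable]: "f \<in> borel_measurable borel"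
    and f_nonneg: "\<And>x. 0 \<le> f x"
    and f_le: "\<And>x. f x \<le> C"
    and f_int: "integrable lborel f"
    and f_prob: "(LINT x|lborel. f x) = 1"
begin

lemma C_nonneg: "0 \<le> C"
  using f_nonneg f_le order_trans by blast

lemma f_bounded_prob_density: "bounded_prob_density C f"
  using nn_integral_eq_integral[OF f_int] f_nonneg f_le f_prob
  unfolding bounded_prob_density_def by simp

lemma convolution_integrable:
  assumes "bounded_prob_density C g"
  shows "integrable lborel (\<lambda>y. g (x - y) * f y)"
proof (rule Bochner_Integration.integrable_bound[where f="\<lambda>y. C * f y"])
  have [measurable]: "g \<in> borel_measurable borel"
    using assms by (simp add: bounded_prob_density_def)
  show "integrable lborel (\<lambda>y. C * f y)" using f_int by simp
  show "(\<lambda>y. g (x - y) * f y) \<in> borel_measurable lborel" by measurable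
  show "AE y in lborel. norm (g (x - y) * f y) \<le> norm (C * f y)"
    using assms f_nonneg C_nonneg
    by (auto simp: bounded_prob_density_def abs_mult intro!: mult_right_mono)
qed

lemma ennreal_convolution:
  assumes "bounded_prob_density C g"
  shows "ennreal (LINT y|lborel. g (x - y) * f y)
    = (\<integral>\<^sup>+y. ennreal (g (x - y)) * ennreal (f y) \<partial>lborel)"
  using nn_integral_eq_integral[OF convolution_integrable[OF assms]] assms f_nonneg
  by (simp add: bounded_prob_density_def ennreal_mult)

lemma convolution_bounded_prob_density:
  assumes g: "bounded_prob_density C g"
  shows "bounded_prob_density C (\<lambda>x. LINT y|lborel. g (x - y) * f y)"
proof -
  have [measurable]: "g \<in> borel_measurable borel" and g_nonneg: "\<And>x. 0 \<le> g x"
    and g_le: "\<And>x. g x \<le> C" and g_mass: "(\<integral>\<^sup>+x. ennreal (g x) \<partial>lborel) = 1"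
    using g by (auto simp: bounded_prob_density_def)
  have nonneg: "0 \<le> (LINT y|lborel. g (x - y) * f y)" for x
    using g_nonneg f_nonneg by (auto intro!: integral_nonneg)
  have le: "(LINT y|lborel. g (x - y) * f y) \<le> C" for x
  proof -
    have "(LINT y|lborel. g (x - y) * f y) \<le> (LINT y|lborel. C * f y)"
      using convolution_integrable[OF g] f_int g_le f_nonneg
      by (intro integral_mono) (auto intro!: mult_right_mono)
    then show ?thesis using f_prob by simp
  qed
  have "(\<integral>\<^sup>+x. ennreal (LINT y|lborel. g (x - y) * f y) \<partial>lborel)
      = (\<integral>\<^sup>+x. (\<integral>\<^sup>+y. ennreal (g (x - y)) * ennreal (f y) \<partial>lborel) \<partial>lborel)"
    by (simp add: ennreal_convolution[OF g])
  also have "\<dots> = (\<integral>\<^sup>+y. (\<integral>\<^sup>+x. ennreal (g (x - y)) * ennreal (f y) \<partial>lborel) \<partial>lborel)"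
    by (rule lborel_pair.Fubini'[symmetric]) measurable
  also have "\<dots> = (\<integral>\<^sup>+y. (\<integral>\<^sup>+x. ennreal (g (x - y)) \<partial>lborel) * ennreal (f y) \<partial>lborel)"
    by (simp add: nn_integral_multc)
  also have "\<dots> = 1"
    using nn_integral_lborel_translate[of "\<lambda>x. ennreal (g x)"] g_mass f_bounded_prob_density
    by (simp add: bounded_prob_density_def)
  finally show ?thesis
    using nonneg le unfolding bounded_prob_density_def by simp
qed

lemma conv_pow_Suc:
  assumes "k \<ge> 1"
  shows "conv_pow f (Suc k) = (\<lambda>x. LINT y|lborel. conv_pow f k (x - y) * f y)"
  using assms by (cases k) auto

lemma conv_pow_bounded_prob_density:
  assumes "k \<ge> 1"
  shows "bounded_prob_density C (conv_pow f k)"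
  using assms
proof (induction k rule: nat_induct_at_least)
  case base
  then show ?case using f_bounded_prob_density by simp
next
  case (Suc k)
  then show ?case
    using convolution_bounded_prob_density by (simp add: conv_pow_Suc)
qed

lemma conv_pow_meas[measurable]: "k \<ge> 1 \<Longrightarrow> conv_pow f k \<in> borel_measurable borel"
  and conv_pow_nonneg: "k \<ge> 1 \<Longrightarrow> 0 \<le> conv_pow f k x"
  and conv_pow_le: "k \<ge> 1 \<Longrightarrow> conv_pow f k x \<le> C"
  and conv_pow_mass: "k \<ge> 1 \<Longrightarrow> (\<integral>\<^sup>+x. ennreal (conv_pow f k x) \<partial>lborel) = 1"
  using conv_pow_bounded_prob_density unfolding bounded_prob_density_def by blast+

lemma ennreal_conv_pow_Suc:
  assumes "k \<ge> 1"
  shows "ennreal (conv_pow f (Suc k) x)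
    = (\<integral>\<^sup>+y. ennreal (conv_pow f k (x - y)) * ennreal (f y) \<partial>lborel)"
  using ennreal_convolution[OF conv_pow_bounded_prob_density[OF assms]]
  by (simp add: conv_pow_Suc[OF assms])

text \<open>The induction on
  \<open>n\<close> uses associativity of convolution, i.e. a translation followed by Fubini.\<close>

lemma ennreal_conv_pow_add:
  assumes m: "m \<ge> 1" and n: "n \<ge> 1"
  shows "ennreal (conv_pow f (m + n) x) =
    (\<integral>\<^sup>+z. ennreal (conv_pow f m (x - z)) * ennreal (conv_pow f n z) \<partial>lborel)"
  using n
proof (induction n arbitrary: x rule: nat_induct_at_least)
  case base
  then show ?case using ennreal_conv_pow_Suc[OF m] by simp
next
  case (Suc n)
  have [measurable]: "conv_pow f m \<in> borel_measurable borel"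
    "conv_pow f n \<in> borel_measurable borel"
    using m Suc by auto
  let ?F = "\<lambda>k x. ennreal (conv_pow f k x)"
  have "?F (m + Suc n) x = (\<integral>\<^sup>+y. ?F (m + n) (x - y) * ennreal (f y) \<partial>lborel)"
    using ennreal_conv_pow_Suc[of "m + n" x] m by simp
  also have "\<dots> = (\<integral>\<^sup>+y. (\<integral>\<^sup>+z. ?F m (x - y - z) * ?F n z * ennreal (f y) \<partial>lborel) \<partial>lborel)"
    by (simp add: Suc.IH nn_integral_multc)
  also have "\<dots> = (\<integral>\<^sup>+y. (\<integral>\<^sup>+w. ?F m (x - w) * ?F n (w - y) * ennreal (f y) \<partial>lborel) \<partial>lborel)"
  proof (rule nn_integral_cong)
    fix y
    show "(\<integral>\<^sup>+z. ?F m (x - y - z) * ?F n z * ennreal (f y) \<partial>lborel)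
        = (\<integral>\<^sup>+w. ?F m (x - w) * ?F n (w - y) * ennreal (f y) \<partial>lborel)"
      using nn_integral_lborel_translate[of "\<lambda>z. ?F m (x - y - z) * ?F n z * ennreal (f y)" y]
      by simp
  qed
  also have "\<dots> = (\<integral>\<^sup>+w. (\<integral>\<^sup>+y. ?F m (x - w) * ?F n (w - y) * ennreal (f y) \<partial>lborel) \<partial>lborel)"
    by (rule lborel_pair.Fubini') measurable
  also have "\<dots> = (\<integral>\<^sup>+w. ?F m (x - w) * (\<integral>\<^sup>+y. ?F n (w - y) * ennreal (f y) \<partial>lborel) \<partial>lborel)"
    by (simp add: nn_integral_cmult mult.assoc)
  also have "\<dots> = (\<integral>\<^sup>+w. ?F m (x - w) * ?F (Suc n) w \<partial>lborel)"
    using ennreal_conv_pow_Suc[of n] Suc by simp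
  finally show ?case .
qed

end

definition Phi_region :: "real \<Rightarrow> real set" where
  "Phi_region u = {z. (\<bar>u\<bar> - 3) / 2 < \<bar>z\<bar>}"

lemma Phi_region_sets[measurable]: "Phi_region u \<in> sets borel"
  unfolding Phi_region_def by measurable

locale local_sup_control = bounded_density +
  fixes h :: "real \<Rightarrow> real" and l :: nat and Ch :: real
  assumes h_meas[measurable]: "h \<in> borel_measurable borel"
    and h_le: "AE x in lborel. \<bar>h x\<bar> \<le> Ch"
    and h_nonneg: "AE x in lborel. h x \<ge> 0"
    and l_pos: "l \<ge> 1"
    and sup_le: "\<And>a::real. Sup (conv_pow f l ` {a..<a+1}) \<le> (LINT w:{a-1..a+2}|lborel. h w)"
begin

abbreviation G :: "real \<Rightarrow> real" where "G \<equiv> conv_pow f l"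

lemma G_meas[measurable]: "G \<in> borel_measurable borel"
  using conv_pow_meas l_pos by simp

lemma G_nonneg: "0 \<le> G x"
  using conv_pow_nonneg[OF l_pos] .

lemma G_integrable: "integrable lborel G"
  using conv_pow_mass[OF l_pos] G_nonneg by (intro integrableI_nonneg) auto

lemma G_prob: "(LINT z|lborel. G z) = 1"
  using integral_eq_nn_integral[of G lborel] conv_pow_mass[OF l_pos] G_nonneg by simp

lemma conv_pow_double_tail:
  "ennreal (conv_pow f (2*l) x) \<le>
   2 * (\<integral>\<^sup>+z. indicator {z. \<bar>x\<bar>/2 \<le> \<bar>z\<bar>} z * ennreal (G z) * ennreal (G (x - z)) \<partial>lborel)"
  using ennreal_conv_pow_add[OF l_pos l_pos, of x]
    nn_self_convolution_tail[of "\<lambda>z. ennreal (G z)" x]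
  by (simp add: mult_2)

text \<open>Second estimate: the hypothesis on the window \<open>[a - z, a - z + 1)\<close>, translated
  by \<open>z\<close>, bounds \<open>G(x - z)\<close> for every \<open>x \<in> [a, a+1)\<close>.\<close>

lemma G_translate_le:
  assumes "x \<in> {a..<a+1}"
  shows "ennreal (G (x - z)) \<le> (\<integral>\<^sup>+u. indicator {a-1..a+2} u * ennreal (h (u - z)) \<partial>lborel)"
proof -
  have bdd: "bdd_above (G ` {a-z..<a-z+1})"
    using conv_pow_le[OF l_pos] by (auto intro!: bdd_aboveI)
  have "G (x - z) \<le> Sup (G ` {a-z..<a-z+1})"
    using assms by (intro cSup_upper[OF _ bdd]) auto
  also have "\<dots> \<le> (LINT w:{a-z-1..a-z+2}|lborel. h w)"
    using sup_le[of "a-z"] by simp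
  finally have "ennreal (G (x - z)) \<le> ennreal (LINT w:{a-z-1..a-z+2}|lborel. h w)"
    by (rule ennreal_leI)
  also have "\<dots> \<le> (\<integral>\<^sup>+w. ennreal (indicator {a-z-1..a-z+2} w *\<^sub>R h w) \<partial>lborel)"
    unfolding set_lebesgue_integral_def by (rule ennreal_integral_le_nn_integral)
  also have "\<dots> = (\<integral>\<^sup>+w. indicator {a-z-1..a-z+2} w * ennreal (h w) \<partial>lborel)"
    by (intro nn_integral_cong) (simp split: split_indicator)
  also have "\<dots> = (\<integral>\<^sup>+u. indicator {a-z-1..a-z+2} (u - z) * ennreal (h (u - z)) \<partial>lborel)"
    by (rule nn_integral_lborel_translate[symmetric]) measurable
  also have "\<dots> = (\<integral>\<^sup>+u. indicator {a-1..a+2} u * ennreal (h (u - z)) \<partial>lborel)"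
    by (intro nn_integral_cong) (simp split: split_indicator)
  finally show ?thesis .
qed

lemma Ch_nonneg: "0 \<le> Ch"
proof -
  have "AE x::real in lborel. 0 \<le> Ch"
    using h_le by (rule eventually_mono) auto
  then show ?thesis
    using ae_filter_eq_bot_iff[of "lborel::real measure"]
    by (cases "0 \<le> Ch") (auto simp: eventually_const_iff)
qed

lemma h_reflect_AE: "AE z in lborel. 0 \<le> h (u - z) \<and> \<bar>h (u - z)\<bar> \<le> Ch"
  using AE_lborel_reflect[OF h_nonneg, of u] AE_lborel_reflect[OF h_le, of u] by auto

lemma Phi_eq: "Phi f l h u = 2 * (LINT z|lborel. indicator (Phi_region u) z *\<^sub>R (G z * h (u - z)))"
  unfolding Phi_def set_lebesgue_integral_def Phi_region_def by simp

lemma Phi_integrand_le: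
  "AE z in lborel. \<bar>indicator (Phi_region u) z *\<^sub>R (G z * h (u - z))\<bar> \<le> Ch * G z"
  using h_reflect_AE[of u]
proof eventually_elim
  case (elim z)
  have "\<bar>G z * h (u - z)\<bar> = G z * \<bar>h (u - z)\<bar>"
    using G_nonneg[of z] by (simp add: abs_mult)
  also have "\<dots> \<le> G z * Ch"
    using elim G_nonneg[of z] by (intro mult_left_mono) auto
  finally have "\<bar>G z * h (u - z)\<bar> \<le> Ch * G z" by (simp add: mult.commute)
  then show ?case
    using elim G_nonneg[of z] by (auto simp: indicator_def)
qed

lemma Phi_integrand_integrable:
  "integrable lborel (\<lambda>z. indicator (Phi_region u) z *\<^sub>R (G z * h (u - z)))"
  by (rule Bochner_Integration.integrable_bound[where f="\<lambda>z. Ch * G z"])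
    (use G_integrable Phi_integrand_le Ch_nonneg in \<open>auto simp: abs_mult_pos G_nonneg\<close>)

lemma ennreal_Phi:
  "ennreal (Phi f l h u) =
   2 * (\<integral>\<^sup>+z. indicator (Phi_region u) z * ennreal (G z) * ennreal (h (u - z)) \<partial>lborel)"
proof -
  have nonneg: "AE z in lborel. 0 \<le> indicator (Phi_region u) z *\<^sub>R (G z * h (u - z))"
    using h_reflect_AE[of u] by eventually_elim (simp add: G_nonneg)
  have "ennreal (LINT z|lborel. indicator (Phi_region u) z *\<^sub>R (G z * h (u - z)))
     = (\<integral>\<^sup>+z. ennreal (indicator (Phi_region u) z *\<^sub>R (G z * h (u - z))) \<partial>lborel)"
    using nn_integral_eq_integral[OF Phi_integrand_integrable nonneg] by simp
  also have "\<dots> = (\<integral>\<^sup>+z. indicator (Phi_region u) z * ennreal (G z) * ennreal (h (u - z)) \<partial>lborel)"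
    using h_reflect_AE[of u]
    by (intro nn_integral_cong_AE, eventually_elim)
      (simp add: G_nonneg ennreal_mult split: split_indicator)
  finally show ?thesis
    using Phi_eq integral_nonneg_AE[OF nonneg] by (simp add: ennreal_mult)
qed

lemma Phi_meas[measurable]: "Phi f l h \<in> borel_measurable borel"
  unfolding Phi_def set_lebesgue_integral_def by measurable

lemma Phi_bounds: "0 \<le> Phi f l h u \<and> Phi f l h u \<le> 2 * Ch"
proof -
  let ?k = "\<lambda>z. indicator (Phi_region u) z *\<^sub>R (G z * h (u - z))"
  have "0 \<le> (LINT z|lborel. ?k z)"
    using h_reflect_AE[of u] by (intro integral_nonneg_AE) (auto elim!: eventually_mono simp: G_nonneg)
  moreover have "(LINT z|lborel. ?k z) \<le> (LINT z|lborel. Ch * G z)"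
    using Phi_integrand_le[of u] G_integrable
    by (intro integral_mono_AE Phi_integrand_integrable) (auto elim!: eventually_mono)
  ultimately show ?thesis using Phi_eq G_prob by simp
qed

lemma ennreal_set_integral_Phi:
  "ennreal (LINT u:{c..d}|lborel. Phi f l h u) = (\<integral>\<^sup>+u. indicator {c..d} u * ennreal (Phi f l h u) \<partial>lborel)"
proof -
  have "ennreal (LINT u:{c..d}|lborel. Phi f l h u)
      = (\<integral>\<^sup>+u. ennreal (indicator {c..d} u *\<^sub>R Phi f l h u) \<partial>lborel)"
    unfolding set_lebesgue_integral_def
  proof (rule nn_integral_eq_integral[symmetric])
    show "integrable lborel (\<lambda>u. indicator {c..d} u *\<^sub>R Phi f l h u)"
      by (rule integrableI_bounded_set_indicator[where B="2*Ch"]) (use Phi_bounds in \<open>auto simp: emeasure_lborel_Icc_eq\<close>)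
    show "AE u in lborel. 0 \<le> indicator {c..d} u *\<^sub>R Phi f l h u"
      using Phi_bounds by simp
  qed
  also have "\<dots> = (\<integral>\<^sup>+u. indicator {c..d} u * ennreal (Phi f l h u) \<partial>lborel)"
    by (intro nn_integral_cong) (simp split: split_indicator)
  finally show ?thesis .
qed

lemma conv_pow_double_le_iterated:
  assumes x: "x \<in> {a..<a+1}"
  defines "A \<equiv> {z::real. \<bar>x\<bar>/2 \<le> \<bar>z\<bar>}"
  shows "ennreal (conv_pow f (2*l) x) \<le> 2 * (\<integral>\<^sup>+u. indicator {a-1..a+2} u *
     (\<integral>\<^sup>+z. indicator A z * ennreal (G z) * ennreal (h (u - z)) \<partial>lborel) \<partial>lborel)"
proof -
  let ?I = "{a-1..a+2::real}"
  have [measurable]: "A \<in> sets borel" unfolding A_def by measurable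
  have "ennreal (conv_pow f (2*l) x) \<le>
      2 * (\<integral>\<^sup>+z. indicator A z * ennreal (G z) * ennreal (G (x - z)) \<partial>lborel)"
    using conv_pow_double_tail unfolding A_def .
  also have "\<dots> \<le> 2 * (\<integral>\<^sup>+z. indicator A z * ennreal (G z) *
        (\<integral>\<^sup>+u. indicator ?I u * ennreal (h (u - z)) \<partial>lborel) \<partial>lborel)"
    using G_translate_le[OF x] by (intro mult_left_mono nn_integral_mono) auto
  also have "\<dots> = 2 * (\<integral>\<^sup>+z. (\<integral>\<^sup>+u. indicator ?I u * (indicator A z * ennreal (G z) * ennreal (h (u - z))) \<partial>lborel) \<partial>lborel)"
    by (simp add: nn_integral_cmult[symmetric] mult.assoc mult.left_commute)
  also have "\<dots> = 2 * (\<integral>\<^sup>+u. (\<integral>\<^sup>+z. indicator ?I u * (indicator A z * ennreal (G z) * ennreal (h (u - z))) \<partial>lborel) \<partial>lborel)"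
    by (rule arg_cong[where f="(*) 2"], rule lborel_pair.Fubini') measurable
  also have "\<dots> = 2 * (\<integral>\<^sup>+u. indicator ?I u * (\<integral>\<^sup>+z. indicator A z * ennreal (G z) * ennreal (h (u - z)) \<partial>lborel) \<partial>lborel)"
    by (simp add: nn_integral_cmult)
  finally show ?thesis .
qed

text \<open>Third estimate: for \<open>u \<in> [a-1, a+2]\<close> and \<open>x \<in> [a, a+1)\<close> we have \<open>|u - x| < 3\<close>,
  so the tail \<open>{z. |x|/2 \<le> |z|}\<close> lies inside the region defining \<open>\<Phi>\<^sub>l(h)(u)\<close>.\<close>

lemma tail_integral_le_Phi:
  assumes x: "x \<in> {a..<a+1}" and u: "u \<in> {a-1..a+2}"
  shows "2 * (\<integral>\<^sup>+z. indicator {z. \<bar>x\<bar>/2 \<le> \<bar>z\<bar>} z * ennreal (G z) * ennreal (h (u - z)) \<partial>lborel)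
    \<le> ennreal (Phi f l h u)"
proof -
  have "{z. \<bar>x\<bar>/2 \<le> \<bar>z\<bar>} \<subseteq> Phi_region u"
    using x u unfolding Phi_region_def by auto
  then show ?thesis
    unfolding ennreal_Phi
    by (intro mult_left_mono nn_integral_mono) (auto split: split_indicator)
qed

lemma conv_pow_double_le:
  assumes x: "x \<in> {a..<a+1}"
  shows "conv_pow f (2*l) x \<le> (LINT u:{a-1..a+2}|lborel. Phi f l h u)"
proof -
  let ?I = "{a-1..a+2::real}"
  have "ennreal (conv_pow f (2*l) x) \<le> 2 * (\<integral>\<^sup>+u. indicator ?I u *
     (\<integral>\<^sup>+z. indicator {z. \<bar>x\<bar>/2 \<le> \<bar>z\<bar>} z * ennreal (G z) * ennreal (h (u - z)) \<partial>lborel) \<partial>lborel)"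
    using conv_pow_double_le_iterated[OF x] .
  also have "\<dots> \<le> (\<integral>\<^sup>+u. indicator ?I u * ennreal (Phi f l h u) \<partial>lborel)"
    using tail_integral_le_Phi[OF x]
    by (subst nn_integral_cmult[symmetric]) (auto intro!: nn_integral_mono simp: mult.left_commute
        split: split_indicator)
  also have "\<dots> = ennreal (LINT u:?I|lborel. Phi f l h u)"
    by (rule ennreal_set_integral_Phi[symmetric])
  finally have "ennreal (conv_pow f (2*l) x) \<le> ennreal (LINT u:?I|lborel. Phi f l h u)" .
  moreover have "0 \<le> (LINT u:?I|lborel. Phi f l h u)"
    unfolding set_lebesgue_integral_def using Phi_bounds
    by (intro Bochner_Integration.integral_nonneg) (simp split: split_indicator)
  ultimately show ?thesis by (simp add: ennreal_le_iff)
qed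

end

theorem lemma3p3:
  fixes f h :: "real \<Rightarrow> real" and l :: nat
  assumes f_meas: "f \<in> borel_measurable borel"
    and f_nonneg: "\<And>x. f x \<ge> 0"
    and f_int: "integrable lborel f"
    and f_prob: "(LINT x|lborel. f x) = 1"
    and f_bdd: "\<exists>C. \<forall>x. f x \<le> C"
    and h_meas: "h \<in> borel_measurable borel"
    and h_Linf: "\<exists>C. AE x in lborel. \<bar>h x\<bar> \<le> C"
    and h_nonneg: "AE x in lborel. h x \<ge> 0"
    and l_pos: "l \<ge> 1"
    and hyp: "\<And>a::real. Sup (conv_pow f l ` {a..<a+1})
                  \<le> (LINT w:{a-1..a+2}|lborel. h w)"
  shows "\<And>a::real. Sup (conv_pow f (2*l) ` {a..<a+1})
                  \<le> (LINT w:{a-1..a+2}|lborel. Phi f l h w)"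
proof -
  fix a :: real
  obtain C where C: "\<And>x. f x \<le> C" using f_bdd by blast
  obtain Ch where Ch: "AE x in lborel. \<bar>h x\<bar> \<le> Ch" using h_Linf by blast
  interpret local_sup_control f C h l Ch
    by unfold_locales (use assms C Ch in auto)
  show "Sup (conv_pow f (2*l) ` {a..<a+1}) \<le> (LINT w:{a-1..a+2}|lborel. Phi f l h w)"
    by (rule cSup_least) (auto intro: conv_pow_double_le)
qed

end
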